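(* In the setting and notation described in the context, let $c\in G_n/\!/K_n$ and $d\in G_k/\!/K_k$ with representatives $g\in G_n$, $h\in G_k$. Then $$B[c]*B[d]=\sum_{\lambda\in\mathrm{PB}(J_k,J_n)} B\big[\,\overline{\overline{g\circledast_\lambda h}}\,\big].$$
   Context: Let $I$ be a finite set, $X$ a finite or countable set, $V=X\sqcup(I\times\mathbb{N})$, $V_n=X\sqcup(I\times J_n)$ with $J_n=\{1,\dots,n\}$. $S_\infty$ (finitely supported permutations of $\mathbb{N}$) acts on $V$ by $\sigma(i,m)=(i,\sigma(m))$ on $I\times\mathbb{N}$ and trivially on $X$; $S_n\subset S_\infty$ permutes $J_n$. $G_\infty$ is a subgroup of the group of finitely supported permutations of $V$ containing $S_\infty$; $G_n$ is the set of elements of $G_\infty$ fixing every point outside $V_n$; $K_n=S_n$; $G_n/\!/K_n$ is the set of orbits of $K_n$ on $G_n$ under conjugation, and $\overline{\overline{r}}$ denotes the class of $r$. Local bijections: a local bijection is a pair $((\omega,\Omega))$ where $\Omega=X\cup(I\times F)$ for a finite $F\subset\mathbb{N}$ and $\omega:\Omega\to\Omega$ is a bijection; $\tilde\omega$ denotes its extension to $V$ fixing all points outside $\Omega$. Their product is $((\omega,\Omega))\circ((\mu,M))=((\tilde\omega\tilde\mu|_{\Omega\cup M},\Omega\cup M))$. Consider formal series $\sum a_{((\omega,\Omega))}((\omega,\Omega))$ with complex coefficients, with convolution $\big(\sum a\,((\omega,\Omega))\big)*\big(\sum b\,((\mu,M))\big)=\sum c_{((\nu,N))}((\nu,N))$,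 $c_{((\nu,N))}=\sum a_{((\omega,\Omega))}b_{((\mu,M))}$ over pairs with $\Omega\cup M=N$ and $\tilde\omega\tilde\mu=\tilde\nu$ (these sums are finite for the products below). For an injective map $\sigma:J_n\to\mathbb{N}$, extend it to the bijection $V_n\to X\cup(I\times\sigma(J_n))$, $(i,m)\mapsto(i,\sigma(m))$, identity on $X$; for $g\in G_n$ write $\sigma((g,V_n))\sigma^{-1}=((\sigma g\sigma^{-1},X\cup(I\times\sigma(J_n))))$. For $c\in G_n/\!/K_n$ with representative $g$ define $B[c]=\sum_{\Omega\subset\mathbb{N},\,\#\Omega=n}\ \sum_{\sigma:J_n\to\Omega\text{ bijective}}\sigma((g,V_n))\sigma^{-1}$ (independent of the representative). A partial bijection $Y\to Z$ is a bijection between a subset $\mathrm{dom}\,\lambda\subseteq Y$ and a subset $\mathrm{im}\,\lambda\subseteq Z$ (empty allowed), $\mathrm{rk}\,\lambda=\#\mathrm{dom}\,\lambda$; $\mathrm{PB}(Y,Z)$ is the set of them; composition: $w\in\mathrm{dom}(\lambda\mu)$ iff $w\in\mathrm{dom}\,\mu$ and $\mu(w)\in\mathrm{dom}\,\lambda$, then $\lambda\mu(w)=\lambda(\mu(w))$. Injective maps and their inverses are viewed as partial bijections. For $g\in G_n$, $h\in G_k$ and $\lambda\in\mathrm{PB}(J_k,J_n)$ of rank $d$, choose injective maps $\sigma_0:J_n\to J_{n+k-d}$, $\tau_0:J_k\to J_{n+k-d}$ with $\sigma_0^{-1}\tau_0=\lambda$ as partial bijections, and let $\overline{\overline{g\circledast_\lambda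 h}}\in G_{n+k-d}/\!/K_{n+k-d}$ be the class of the permutation $\tilde\nu$ where $((\nu,V_{n+k-d}))=\sigma_0((g,V_n))\sigma_0^{-1}\circ\tau_0((h,V_k))\tau_0^{-1}$; this class does not depend on the choice of $\sigma_0,\tau_0$. *)

theory Defs
  imports Complex_Main "HOL-Library.FuncSet" "HOL-Library.Countable_Set"
begin

text \<open>Points of V live in the type ('x + 'i * nat); X :: 'x set, I :: 'i set.
  The paper's natural numbers are {1,2,...} = {1..}; J_n = {1..n}.\<close>

type_synonym ('x,'i) pt = "'x + 'i \<times> nat"

definition Vset :: "'x set \<Rightarrow> 'i set \<Rightarrow> ('x,'i) pt set" where
  "Vset X I = Inl ` X \<union> Inr ` (I \<times> {1..})"

definition Omega :: "'x set \<Rightarrow> 'i set \<Rightarrow> nat set \<Rightarrow> ('x,'i) pt set" where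
  "Omega X I F = Inl ` X \<union> Inr ` (I \<times> F)"

definition Vn :: "'x set \<Rightarrow> 'i set \<Rightarrow> nat \<Rightarrow> ('x,'i) pt set" where
  "Vn X I n = Omega X I {1..n}"

definition fperm :: "'x set \<Rightarrow> 'i set \<Rightarrow> (('x,'i) pt \<Rightarrow> ('x,'i) pt) \<Rightarrow> bool" where
  "fperm X I f \<longleftrightarrow> bij f \<and> finite {v. f v \<noteq> v} \<and> (\<forall>v. v \<notin> Vset X I \<longrightarrow> f v = v)"

text \<open>finitely supported permutations of the paper's N = {1..} (0 is a dummy point, fixed)\<close>
definition S_inf :: "(nat \<Rightarrow> nat) set" where
  "S_inf = {\<sigma>. bij \<sigma> \<and> finite {m. \<sigma> m \<noteq> m} \<and> \<sigma> 0 = 0}"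

definition liftS :: "'i set \<Rightarrow> (nat \<Rightarrow> nat) \<Rightarrow> ('x,'i) pt \<Rightarrow> ('x,'i) pt" where
  "liftS I \<sigma> v = (case v of Inl x \<Rightarrow> Inl x
                    | Inr (i,m) \<Rightarrow> (if i \<in> I then Inr (i, \<sigma> m) else Inr (i,m)))"

definition admissible :: "'x set \<Rightarrow> 'i set \<Rightarrow> (('x,'i) pt \<Rightarrow> ('x,'i) pt) set \<Rightarrow> bool" where
  "admissible X I G \<longleftrightarrow> G \<subseteq> {f. fperm X I f} \<and> id \<in> G \<and>
     (\<forall>f\<in>G. \<forall>g\<in>G. f \<circ> g \<in> G) \<and> (\<forall>f\<in>G. inv f \<in> G) \<and> liftS I ` S_inf \<subseteq> G"

definition Gn :: "'x set \<Rightarrow> 'i set \<Rightarrow> (('x,'i) pt \<Rightarrow> ('x,'i) pt) set \<Rightarrow> nat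
     \<Rightarrow> (('x,'i) pt \<Rightarrow> ('x,'i) pt) set" where
  "Gn X I G n = {g \<in> G. \<forall>v. v \<notin> Vn X I n \<longrightarrow> g v = v}"

definition Kn :: "'i set \<Rightarrow> nat \<Rightarrow> (('x,'i) pt \<Rightarrow> ('x,'i) pt) set" where
  "Kn I n = liftS I ` {\<sigma> \<in> S_inf. \<forall>m. m \<notin> {1..n} \<longrightarrow> \<sigma> m = m}"

definition cls :: "'i set \<Rightarrow> nat \<Rightarrow> (('x,'i) pt \<Rightarrow> ('x,'i) pt) \<Rightarrow> (('x,'i) pt \<Rightarrow> ('x,'i) pt) set" where
  "cls I n g = {\<kappa> \<circ> g \<circ> inv \<kappa> | \<kappa>. \<kappa> \<in> Kn I n}"

definition quotGK :: "'x set \<Rightarrow> 'i set \<Rightarrow> (('x,'i) pt \<Rightarrow> ('x,'i) pt) set \<Rightarrow> nat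
     \<Rightarrow> (('x,'i) pt \<Rightarrow> ('x,'i) pt) set set" where
  "quotGK X I G n = cls I n ` Gn X I G n"

text \<open>A local bijection ((omega,Omega)) with Omega = X \<union> I \<times> F is encoded as the pair
  (F, omega~), where omega~ is the extension of omega to the whole type by the identity.\<close>
type_synonym ('x,'i) lb = "nat set \<times> (('x,'i) pt \<Rightarrow> ('x,'i) pt)"

type_synonym ('x,'i) fser = "('x,'i) lb \<Rightarrow> complex"

definition conv :: "('x,'i) fser \<Rightarrow> ('x,'i) fser \<Rightarrow> ('x,'i) fser" where
  "conv a b = (\<lambda>(N,\<nu>). \<Sum>(p,q) \<in> {(p,q). a p \<noteq> 0 \<and> b q \<noteq> 0 \<and> fst p \<union> fst q = N \<and> snd p \<circ> snd q = \<nu>}.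
                 a p * b q)"

definition liftP :: "(nat \<Rightarrow> nat) \<Rightarrow> ('x,'i) pt \<Rightarrow> ('x,'i) pt" where
  "liftP \<sigma> v = (case v of Inl x \<Rightarrow> Inl x | Inr (i,m) \<Rightarrow> Inr (i, \<sigma> m))"

text \<open>\<sigma> ((g,V_n)) \<sigma>^{-1}, for \<sigma> injective on J_n\<close>
definition conj_lb :: "'x set \<Rightarrow> 'i set \<Rightarrow> nat \<Rightarrow> (nat \<Rightarrow> nat) \<Rightarrow> (('x,'i) pt \<Rightarrow> ('x,'i) pt) \<Rightarrow> ('x,'i) lb" where
  "conj_lb X I n \<sigma> g = (\<sigma> ` {1..n},
     (\<lambda>v. if v \<in> Omega X I (\<sigma> ` {1..n})
          then liftP \<sigma> (g (liftP (the_inv_into {1..n} \<sigma>) v)) else v))"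

text \<open>B for a representative g: sum over all injective \<sigma> : J_n \<rightarrow> N
  (i.e. over all \<Omega> with #\<Omega> = n and bijections J_n \<rightarrow> \<Omega>)\<close>
definition Bser :: "'x set \<Rightarrow> 'i set \<Rightarrow> nat \<Rightarrow> (('x,'i) pt \<Rightarrow> ('x,'i) pt) \<Rightarrow> ('x,'i) fser" where
  "Bser X I n g = (\<lambda>l. of_nat (card {\<sigma> \<in> {1..n} \<rightarrow>\<^sub>E {1..}. inj_on \<sigma> {1..n} \<and> conj_lb X I n \<sigma> g = l}))"

definition Bcls :: "'x set \<Rightarrow> 'i set \<Rightarrow> nat \<Rightarrow> (('x,'i) pt \<Rightarrow> ('x,'i) pt) set \<Rightarrow> ('x,'i) fser" where
  "Bcls X I n c = Bser X I n (SOME g. g \<in> c)"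

definition PB :: "nat \<Rightarrow> nat \<Rightarrow> (nat \<rightharpoonup> nat) set" where
  "PB k n = {L. dom L \<subseteq> {1..k} \<and> ran L \<subseteq> {1..n} \<and> inj_on L (dom L)}"

definition rk :: "(nat \<rightharpoonup> nat) \<Rightarrow> nat" where
  "rk L = card (dom L)"

definition pb_of :: "nat \<Rightarrow> (nat \<Rightarrow> nat) \<Rightarrow> (nat \<rightharpoonup> nat)" where
  "pb_of n \<sigma> = (\<lambda>w. if w \<in> {1..n} then Some (\<sigma> w) else None)"

definition pb_inv :: "(nat \<rightharpoonup> nat) \<Rightarrow> (nat \<rightharpoonup> nat)" where
  "pb_inv L = (\<lambda>z. if z \<in> ran L then Some (THE w. L w = Some z) else None)"

text \<open>the class of g \<circledast>_\<lambda> h in G_{n+k-d}//K_{n+k-d} (composition of partial bijections = map_comp)\<close>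
definition star_cls :: "'i set \<Rightarrow> 'x set \<Rightarrow> nat \<Rightarrow> nat \<Rightarrow> (('x,'i) pt \<Rightarrow> ('x,'i) pt)
     \<Rightarrow> (('x,'i) pt \<Rightarrow> ('x,'i) pt) \<Rightarrow> (nat \<rightharpoonup> nat) \<Rightarrow> (('x,'i) pt \<Rightarrow> ('x,'i) pt) set" where
  "star_cls I X n k g h L =
     (let m = n + k - rk L;
          st = (SOME (\<sigma>0, \<tau>0). \<sigma>0 \<in> {1..n} \<rightarrow>\<^sub>E {1..m} \<and> inj_on \<sigma>0 {1..n} \<and>
                               \<tau>0 \<in> {1..k} \<rightarrow>\<^sub>E {1..m} \<and> inj_on \<tau>0 {1..k} \<and>
                               pb_inv (pb_of n \<sigma>0) \<circ>\<^sub>m pb_of k \<tau>0 = L)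
      in cls I m (snd (conj_lb X I n (fst st) g) \<circ> snd (conj_lb X I k (snd st) h)))"

end

theory Submission
  imports Defs "HOL-Combinatorics.Permutations"
begin

text \<open>
  For a permutation f supported on V_m, B[f] counts the injections \<sigma> : J_m \<rightarrow> \<nat> through which f is
  transported. A term of B[g] * B[h] is thus a pair (\<sigma>, \<tau>) of injections, and we sort these pairs
  by the partial bijection \<lambda> = \<sigma>\<inverse> \<tau> in PB(J_k, J_n). If (\<sigma>0, \<tau>0) realizes \<lambda> inside
  J_{n+k-rk \<lambda>}, their images cover J_{n+k-rk \<lambda>}, so the pairs with pattern \<lambda> are exactly the pairs
  (\<rho> \<sigma>0, \<rho> \<tau>0) for a unique injection \<rho> of J_{n+k-rk \<lambda>} (amalgamation); transport being
  functorial, the product of such a pair is the transport by \<rho> of the representative of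
  g \<circledast>_\<lambda> h. Finally B[f] depends only on the class of f, because conjugating by K_n = S_n is
  transporting along a permutation of J_n, which merely reparametrizes the injections.
\<close>

section \<open>Fibres, injections and amalgamation\<close>

lemma card_eq_sum_card_fibres:
  assumes "finite S" and "finite T" and "f ` S \<subseteq> T"
  shows "card S = (\<Sum>y\<in>T. card {x \<in> S. f x = y})"
  using sum.group[OF assms, of "\<lambda>_. 1 :: nat"] by simp

lemma sum_card_fibres_mult:
  fixes S :: "'a set" and T :: "'b set" and \<phi> :: "'a \<Rightarrow> 'p" and \<psi> :: "'b \<Rightarrow> 'q"
    and R :: "'p \<Rightarrow> 'q \<Rightarrow> bool"
  defines "P \<equiv> {(x, y). x \<in> S \<and> y \<in> T \<and> R (\<phi> x) (\<psi> y)}"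
  assumes fin: "finite P" and fin_S: "\<And>p. finite {x \<in> S. \<phi> x = p}" and fin_T: "\<And>q. finite {y \<in> T. \<psi> y = q}"
  shows "(\<Sum>(p, q) \<in> {(p, q). card {x \<in> S. \<phi> x = p} \<noteq> 0 \<and> card {y \<in> T. \<psi> y = q} \<noteq> 0 \<and> R p q}.
           card {x \<in> S. \<phi> x = p} * card {y \<in> T. \<psi> y = q}) = card P"
proof -
  define \<Phi> where "\<Phi> = (\<lambda>(x, y). (\<phi> x, \<psi> y))"
  have index: "{(p, q). card {x \<in> S. \<phi> x = p} \<noteq> 0 \<and> card {y \<in> T. \<psi> y = q} \<noteq> 0 \<and> R p q} = \<Phi> ` P"
    using fin_S fin_T by (auto simp: P_def \<Phi>_def image_iff card_eq_0_iff)
  have fibre: "{s \<in> P. \<Phi> s = z} = {x \<in> S. \<phi> x = fst z} \<times> {y \<in> T. \<psi> y = snd z}" if "z \<in> \<Phi> ` P" for z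
    using that by (auto simp: P_def \<Phi>_def)
  have "card P = (\<Sum>z \<in> \<Phi> ` P. card {s \<in> P. \<Phi> s = z})"
    using fin by (intro card_eq_sum_card_fibres) auto
  also have "\<dots> = (\<Sum>z \<in> \<Phi> ` P. card {x \<in> S. \<phi> x = fst z} * card {y \<in> T. \<psi> y = snd z})"
    by (intro sum.cong refl) (simp add: fibre card_cartesian_product)
  finally show ?thesis
    unfolding index by (simp add: case_prod_beta)
qed

lemma map_eqI: "(\<And>b a. f b = Some a \<longleftrightarrow> g b = Some a) \<Longrightarrow> f = g"
  by (rule ext) (metis not_None_eq)

lemma image_compose: "compose A \<sigma> \<rho> ` A = \<sigma> ` \<rho> ` A"
  by (auto simp: compose_eq)

lemma inj_on_compose_subset:
  assumes "inj_on \<rho> A" "\<rho> ` A \<subseteq> B" "inj_on \<sigma> B"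
  shows "inj_on (compose A \<sigma> \<rho>) A"
  using comp_inj_on[OF assms(1) inj_on_subset[OF assms(3,2)]]
  by (simp add: compose_def o_def)

definition injections :: "'a set \<Rightarrow> 'b set \<Rightarrow> ('a \<Rightarrow> 'b) set" where
  "injections A D = {\<sigma> \<in> A \<rightarrow>\<^sub>E D. inj_on \<sigma> A}"

lemma injections_compose:
  assumes "inj_on \<rho> A" and "\<rho> ` A \<subseteq> B" and "\<sigma> \<in> injections B D"
  shows "compose A \<sigma> \<rho> \<in> injections A D"
proof -
  have \<sigma>: "\<sigma> \<in> B \<rightarrow>\<^sub>E D" "inj_on \<sigma> B"
    using assms(3) by (simp_all add: injections_def)
  have "compose A \<sigma> \<rho> \<in> A \<rightarrow>\<^sub>E D"
    using assms(2) \<sigma>(1) by (auto simp: PiE_iff compose_eq image_subset_iff)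
  with inj_on_compose_subset[OF assms(1,2) \<sigma>(2)] show ?thesis
    by (simp add: injections_def)
qed

lemma injections_PiE_image: "\<sigma> \<in> injections A D \<Longrightarrow> \<sigma> \<in> A \<rightarrow>\<^sub>E \<sigma> ` A"
  by (auto simp: injections_def PiE_def)

lemma finite_injections_onto:
  assumes "finite A"
  shows "finite {\<sigma> \<in> injections A D. \<sigma> ` A = F}"
proof (cases "finite F")
  case True
  have "{\<sigma> \<in> injections A D. \<sigma> ` A = F} \<subseteq> A \<rightarrow>\<^sub>E F"
    by (auto simp: injections_def PiE_def)
  with True assms show ?thesis
    by (meson finite_PiE finite_subset)
next
  case False
  with assms have "{\<sigma> \<in> injections A D. \<sigma> ` A = F} = {}"
    by (metis (mono_tags, lifting) Collect_empty_eq finite_imageI)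
  then show ?thesis
    by (simp only: finite.emptyI)
qed

lemma bij_betw_compose_injections:
  assumes "bij_betw \<rho> A B"
  shows "bij_betw (\<lambda>\<sigma>. compose A \<sigma> \<rho>) (injections B D) (injections A D)"
proof (rule bij_betw_byWitness[where f' = "\<lambda>\<tau>. compose B \<tau> (restrict (inv_into A \<rho>) B)"])
  have \<rho>': "bij_betw (restrict (inv_into A \<rho>) B) B A"
    using assms by (simp add: bij_betw_inv_into)
  show "(\<lambda>\<sigma>. compose A \<sigma> \<rho>) ` injections B D \<subseteq> injections A D"
    using injections_compose[OF bij_betw_imp_inj_on[OF assms] equalityD1[OF bij_betw_imp_surj_on[OF assms]]]
    by blast
  show "(\<lambda>\<tau>. compose B \<tau> (restrict (inv_into A \<rho>) B)) ` injections A D \<subseteq> injections B D"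
    using injections_compose[OF bij_betw_imp_inj_on[OF \<rho>'] equalityD1[OF bij_betw_imp_surj_on[OF \<rho>']]]
    by blast
  show "\<forall>\<sigma>\<in>injections B D. compose B (compose A \<sigma> \<rho>) (restrict (inv_into A \<rho>) B) = \<sigma>"
    using assms by (auto simp: injections_def compose_def restrict_def fun_eq_iff
        bij_betw_def f_inv_into_f inv_into_into PiE_def extensional_def)
  show "\<forall>\<tau>\<in>injections A D. compose A (compose B \<tau> (restrict (inv_into A \<rho>) B)) \<rho> = \<tau>"
    using assms by (auto simp: injections_def compose_def restrict_def fun_eq_iff
        bij_betw_def PiE_def extensional_def)
qed

lemma amalgamation:
  assumes \<sigma>0: "inj_on \<sigma>0 A" and \<tau>0: "inj_on \<tau>0 B" and cover: "\<sigma>0 ` A \<union> \<tau>0 ` B = C"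
    and \<sigma>: "\<sigma> \<in> injections A D" and \<tau>: "\<tau> \<in> injections B D"
    and coincide: "\<forall>a\<in>A. \<forall>b\<in>B. \<sigma> a = \<tau> b \<longleftrightarrow> \<sigma>0 a = \<tau>0 b"
  obtains \<rho> where "\<rho> \<in> injections C D" and "\<forall>a\<in>A. \<rho> (\<sigma>0 a) = \<sigma> a" and "\<forall>b\<in>B. \<rho> (\<tau>0 b) = \<tau> b"
proof
  define \<rho> where "\<rho> = restrict (\<lambda>x. if x \<in> \<sigma>0 ` A then \<sigma> (inv_into A \<sigma>0 x) else \<tau> (inv_into B \<tau>0 x)) C"
  show \<rho>_\<sigma>0: "\<forall>a\<in>A. \<rho> (\<sigma>0 a) = \<sigma> a"
    using \<sigma>0 cover by (auto simp: \<rho>_def)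
  show \<rho>_\<tau>0: "\<forall>b\<in>B. \<rho> (\<tau>0 b) = \<tau> b"
  proof
    fix b
    assume b: "b \<in> B"
    show "\<rho> (\<tau>0 b) = \<tau> b"
    proof (cases "\<tau>0 b \<in> \<sigma>0 ` A")
      case True
      then obtain a where "a \<in> A" "\<tau>0 b = \<sigma>0 a"
        by blast
      with b \<rho>_\<sigma>0 coincide show ?thesis
        by metis
    next
      case False
      with b \<tau>0 cover show ?thesis
        by (auto simp: \<rho>_def)
    qed
  qed
  have \<rho>_cases: "(\<exists>a\<in>A. x = \<sigma>0 a \<and> \<rho> x = \<sigma> a) \<or> (\<exists>b\<in>B. x = \<tau>0 b \<and> \<rho> x = \<tau> b)" if "x \<in> C" for x
    using that cover \<rho>_\<sigma>0 \<rho>_\<tau>0 by blast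
  have "\<rho> \<in> C \<rightarrow>\<^sub>E D"
  proof -
    have "\<rho> x \<in> D" if "x \<in> C" for x
      using \<rho>_cases[OF that] \<sigma> \<tau> by (auto simp: injections_def)
    then show ?thesis
      by (simp add: PiE_iff \<rho>_def)
  qed
  moreover have "inj_on \<rho> C"
  proof (rule inj_onI)
    fix x y
    assume "x \<in> C" "y \<in> C" and eq: "\<rho> x = \<rho> y"
    then show "x = y"
      using \<rho>_cases[of x] \<rho>_cases[of y] \<sigma> \<tau> coincide
      by (auto simp: injections_def dest: inj_onD) metis+
  qed
  ultimately show "\<rho> \<in> injections C D"
    by (simp add: injections_def)
qed

lemma inj_on_compose_pair:
  assumes cover: "\<sigma>0 ` A \<union> \<tau>0 ` B = C"
  shows "inj_on (\<lambda>\<rho>. (compose A \<rho> \<sigma>0, compose B \<rho> \<tau>0)) (injections C D)"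
proof (rule inj_onI)
  fix \<rho> \<rho>'
  assume \<rho>: "\<rho> \<in> injections C D" and \<rho>': "\<rho>' \<in> injections C D"
    and eq: "(compose A \<rho> \<sigma>0, compose B \<rho> \<tau>0) = (compose A \<rho>' \<sigma>0, compose B \<rho>' \<tau>0)"
  have "\<rho> x = \<rho>' x" if "x \<in> C" for x
  proof -
    from that cover consider a where "a \<in> A" "x = \<sigma>0 a" | b where "b \<in> B" "x = \<tau>0 b"
      by blast
    then show ?thesis
    proof cases
      case 1
      then show ?thesis
        using fun_cong[of _ _ a, OF arg_cong[OF eq, of fst]] by (simp add: compose_eq)
    next
      case 2
      then show ?thesis
        using fun_cong[of _ _ b, OF arg_cong[OF eq, of snd]] by (simp add: compose_eq)
    qed
  qed
  with \<rho> \<rho>' show "\<rho> = \<rho>'"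
    unfolding injections_def by (blast intro: PiE_ext)
qed

lemma bij_betw_amalgamate:
  assumes \<sigma>0: "inj_on \<sigma>0 A" and \<tau>0: "inj_on \<tau>0 B" and cover: "\<sigma>0 ` A \<union> \<tau>0 ` B = C"
  shows "bij_betw (\<lambda>\<rho>. (compose A \<rho> \<sigma>0, compose B \<rho> \<tau>0)) (injections C D)
           {(\<sigma>, \<tau>). \<sigma> \<in> injections A D \<and> \<tau> \<in> injections B D \<and>
                    (\<forall>a\<in>A. \<forall>b\<in>B. \<sigma> a = \<tau> b \<longleftrightarrow> \<sigma>0 a = \<tau>0 b)}"
  unfolding bij_betw_def
proof (intro conjI subset_antisym subsetI)
  show "inj_on (\<lambda>\<rho>. (compose A \<rho> \<sigma>0, compose B \<rho> \<tau>0)) (injections C D)"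
    using cover by (rule inj_on_compose_pair)
next
  fix p
  assume "p \<in> (\<lambda>\<rho>. (compose A \<rho> \<sigma>0, compose B \<rho> \<tau>0)) ` injections C D"
  then obtain \<rho> where \<rho>: "\<rho> \<in> injections C D" and p: "p = (compose A \<rho> \<sigma>0, compose B \<rho> \<tau>0)"
    by blast
  have \<sigma>0_C: "\<sigma>0 ` A \<subseteq> C" and \<tau>0_C: "\<tau>0 ` B \<subseteq> C"
    using cover by blast+
  have "\<rho> (\<sigma>0 a) = \<rho> (\<tau>0 b) \<longleftrightarrow> \<sigma>0 a = \<tau>0 b" if "a \<in> A" "b \<in> B" for a b
  proof -
    have "\<sigma>0 a \<in> C" "\<tau>0 b \<in> C"
      using that \<sigma>0_C \<tau>0_C by blast+
    moreover have "inj_on \<rho> C"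
      using \<rho> by (simp add: injections_def)
    ultimately show ?thesis
      by (auto dest: inj_onD)
  qed
  then show "p \<in> {(\<sigma>, \<tau>). \<sigma> \<in> injections A D \<and> \<tau> \<in> injections B D \<and>
                    (\<forall>a\<in>A. \<forall>b\<in>B. \<sigma> a = \<tau> b \<longleftrightarrow> \<sigma>0 a = \<tau>0 b)}"
    using p injections_compose[OF \<sigma>0 \<sigma>0_C \<rho>] injections_compose[OF \<tau>0 \<tau>0_C \<rho>]
    by (simp add: compose_eq)
next
  fix p
  assume "p \<in> {(\<sigma>, \<tau>). \<sigma> \<in> injections A D \<and> \<tau> \<in> injections B D \<and>
                    (\<forall>a\<in>A. \<forall>b\<in>B. \<sigma> a = \<tau> b \<longleftrightarrow> \<sigma>0 a = \<tau>0 b)}"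
  then obtain \<sigma> \<tau> where p: "p = (\<sigma>, \<tau>)" and \<sigma>: "\<sigma> \<in> injections A D" and \<tau>: "\<tau> \<in> injections B D"
    and coincide: "\<forall>a\<in>A. \<forall>b\<in>B. \<sigma> a = \<tau> b \<longleftrightarrow> \<sigma>0 a = \<tau>0 b"
    by blast
  obtain \<rho> where \<rho>: "\<rho> \<in> injections C D" "\<forall>a\<in>A. \<rho> (\<sigma>0 a) = \<sigma> a" "\<forall>b\<in>B. \<rho> (\<tau>0 b) = \<tau> b"
    using amalgamation[OF \<sigma>0 \<tau>0 cover \<sigma> \<tau> coincide] .
  have "compose A \<rho> \<sigma>0 = \<sigma>"
    using \<rho>(2) \<sigma> by (intro extensionalityI[OF compose_extensional]) (auto simp: injections_def compose_eq PiE_def)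
  moreover have "compose B \<rho> \<tau>0 = \<tau>"
    using \<rho>(3) \<tau> by (intro extensionalityI[OF compose_extensional]) (auto simp: injections_def compose_eq PiE_def)
  ultimately show "p \<in> (\<lambda>\<rho>. (compose A \<rho> \<sigma>0, compose B \<rho> \<tau>0)) ` injections C D"
    using \<rho>(1) p by (intro image_eqI[of _ _ \<rho>]) auto
qed

lemma extend_partial_injection:
  assumes "finite A" and "dom L \<subseteq> A" and "ran L \<subseteq> B" and "inj_on L (dom L)"
    and "finite C" and "B \<inter> C = {}" and "card C = card (A - dom L)"
  obtains \<tau> where "inj_on \<tau> A" and "\<tau> ` A \<subseteq> B \<union> C"
    and "\<And>a b. a \<in> A \<Longrightarrow> b \<in> B \<Longrightarrow> \<tau> a = b \<longleftrightarrow> L a = Some b"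
proof -
  obtain \<phi> where \<phi>: "bij_betw \<phi> (A - dom L) C"
    using finite_same_card_bij[of "A - dom L" C] assms(1,5,7) by auto
  define \<tau> where "\<tau> a = (case L a of Some b \<Rightarrow> b | None \<Rightarrow> \<phi> a)" for a
  have \<tau>_dom: "L a = Some (\<tau> a)" if "a \<in> dom L" for a
    using that by (auto simp: \<tau>_def)
  have \<tau>_B: "\<tau> a \<in> B" if "a \<in> dom L" for a
    using ranI[of L a, OF \<tau>_dom[OF that]] assms(3) by auto
  have \<tau>_rest: "\<tau> a = \<phi> a" if "a \<notin> dom L" for a
    using that by (simp add: \<tau>_def domIff)
  have \<tau>_C: "\<tau> a \<in> C" if "a \<in> A - dom L" for a
    using that \<phi> \<tau>_rest by (auto simp: bij_betw_def)
  show thesis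
  proof
    show "inj_on \<tau> A"
    proof (rule inj_onI)
      fix a a'
      assume a: "a \<in> A" "a' \<in> A" and eq: "\<tau> a = \<tau> a'"
      consider "a \<in> dom L" "a' \<in> dom L" | "a \<notin> dom L" "a' \<notin> dom L"
        | "a \<in> dom L \<longleftrightarrow> a' \<notin> dom L"
        by blast
      then show "a = a'"
      proof cases
        case 1
        then show ?thesis
          using eq \<tau>_dom inj_onD[OF assms(4)] by metis
      next
        case 2
        then show ?thesis
          using eq a \<tau>_rest bij_betw_imp_inj_on[OF \<phi>] by (simp add: inj_on_def)
      next
        case 3
        then have "\<tau> a \<in> B \<inter> C"
          using eq a \<tau>_B \<tau>_C by (metis DiffI IntI)
        with assms(6) show ?thesis
          by simp
      qed
    qed
    show "\<tau> ` A \<subseteq> B \<union> C"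
      using \<tau>_B \<tau>_C by blast
    show "\<tau> a = b \<longleftrightarrow> L a = Some b" if "a \<in> A" "b \<in> B" for a b
    proof (cases "a \<in> dom L")
      case True
      then show ?thesis
        using \<tau>_dom by auto
    next
      case False
      then show ?thesis
        using \<tau>_C[of a] that assms(6) by (auto simp: domIff)
    qed
  qed
qed

section \<open>Transport along injections\<close>

lemma Omega_Inl [simp]: "Inl x \<in> Omega X I F \<longleftrightarrow> x \<in> X"
  by (auto simp: Omega_def)

lemma Omega_Inr [simp]: "Inr (i, a) \<in> Omega X I F \<longleftrightarrow> i \<in> I \<and> a \<in> F"
  by (auto simp: Omega_def)

lemma Omega_mono: "F \<subseteq> F' \<Longrightarrow> Omega X I F \<subseteq> Omega X I F'"
  by (auto simp: Omega_def)

lemma liftP_Inl [simp]: "liftP \<sigma> (Inl x) = Inl x"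
  by (simp add: liftP_def)

lemma liftP_Inr [simp]: "liftP \<sigma> (Inr (i, a)) = Inr (i, \<sigma> a)"
  by (simp add: liftP_def)

lemma liftS_Inl [simp]: "liftS I \<sigma> (Inl x) = Inl x"
  by (simp add: liftS_def)

lemma liftS_Inr [simp]: "liftS I \<sigma> (Inr (i, a)) = (if i \<in> I then Inr (i, \<sigma> a) else Inr (i, a))"
  by (simp add: liftS_def)

lemma pt_cases: obtains x where "v = Inl x" | i a where "v = Inr (i, a)"
  by (cases v) auto

lemma image_liftP_Omega: "liftP \<sigma> ` Omega X I F = Omega X I (\<sigma> ` F)"
  by (force simp: Omega_def liftP_def)

lemma liftP_compose: "w \<in> Omega X I F \<Longrightarrow> liftP (compose F \<sigma> \<rho>) w = liftP \<sigma> (liftP \<rho> w)"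
  by (cases w rule: pt_cases) (auto simp: compose_eq)

lemma liftS_eq_liftP: "v \<in> Omega X I F \<Longrightarrow> liftS I \<rho> v = liftP \<rho> v"
  by (cases v rule: pt_cases) auto

definition transport :: "'x set \<Rightarrow> 'i set \<Rightarrow> nat \<Rightarrow> (nat \<Rightarrow> nat)
    \<Rightarrow> (('x,'i) pt \<Rightarrow> ('x,'i) pt) \<Rightarrow> ('x,'i) pt \<Rightarrow> ('x,'i) pt" where
  "transport X I m \<sigma> f = snd (conj_lb X I m \<sigma> f)"

definition confined :: "'a set \<Rightarrow> ('a \<Rightarrow> 'a) \<Rightarrow> bool" where
  "confined A f \<longleftrightarrow> (\<forall>v. v \<notin> A \<longrightarrow> f v = v) \<and> (\<forall>v\<in>A. f v \<in> A)"

lemma conj_lb_eq: "conj_lb X I m \<sigma> f = (\<sigma> ` {1..m}, transport X I m \<sigma> f)"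
  by (simp add: transport_def conj_lb_def)

lemma transport_outside: "v \<notin> Omega X I (\<sigma> ` {1..m}) \<Longrightarrow> transport X I m \<sigma> f v = v"
  by (simp add: transport_def conj_lb_def)

lemma transport_liftP:
  assumes "inj_on \<sigma> {1..m}" and "w \<in> Omega X I {1..m}"
  shows "transport X I m \<sigma> f (liftP \<sigma> w) = liftP \<sigma> (f w)"
  using assms by (cases w rule: pt_cases) (auto simp: transport_def conj_lb_def the_inv_into_f_f)

lemma transport_eqI:
  assumes "inj_on \<sigma> {1..m}"
    and "\<And>v. v \<notin> Omega X I (\<sigma> ` {1..m}) \<Longrightarrow> f' v = v"
    and "\<And>w. w \<in> Omega X I {1..m} \<Longrightarrow> f' (liftP \<sigma> w) = liftP \<sigma> (f w)"
  shows "transport X I m \<sigma> f = f'"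
proof
  fix v
  show "transport X I m \<sigma> f v = f' v"
  proof (cases "v \<in> Omega X I (\<sigma> ` {1..m})")
    case True
    then obtain w where "w \<in> Omega X I {1..m}" "v = liftP \<sigma> w"
      unfolding image_liftP_Omega[symmetric] by blast
    then show ?thesis using assms by (simp add: transport_liftP)
  qed (simp add: assms transport_outside)
qed

lemma confined_mono: "confined A f \<Longrightarrow> A \<subseteq> B \<Longrightarrow> confined B f"
  unfolding confined_def by (metis subsetD)

lemma confined_comp: "confined A f \<Longrightarrow> confined A g \<Longrightarrow> confined A (f \<circ> g)"
  unfolding confined_def by auto

lemma confined_transport:
  assumes "confined (Omega X I {1..m}) f" and "inj_on \<sigma> {1..m}"
  shows "confined (Omega X I (\<sigma> ` {1..m})) (transport X I m \<sigma> f)"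
  unfolding confined_def
proof (intro conjI allI impI ballI)
  fix v
  assume "v \<in> Omega X I (\<sigma> ` {1..m})"
  then obtain w where w: "w \<in> Omega X I {1..m}" and v: "v = liftP \<sigma> w"
    unfolding image_liftP_Omega[symmetric] by blast
  then have "f w \<in> Omega X I {1..m}"
    using assms(1) by (simp add: confined_def)
  then have "liftP \<sigma> (f w) \<in> Omega X I (\<sigma> ` {1..m})"
    unfolding image_liftP_Omega[symmetric] by blast
  with w v assms(2) show "transport X I m \<sigma> f v \<in> Omega X I (\<sigma> ` {1..m})"
    by (simp add: transport_liftP)
qed (rule transport_outside)

lemma transport_comp:
  assumes "confined (Omega X I {1..m}) b" and "inj_on \<sigma> {1..m}"
  shows "transport X I m \<sigma> (a \<circ> b) = transport X I m \<sigma> a \<circ> transport X I m \<sigma> b"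
proof (rule transport_eqI[OF assms(2)])
  fix v
  assume "v \<notin> Omega X I (\<sigma> ` {1..m})"
  then show "(transport X I m \<sigma> a \<circ> transport X I m \<sigma> b) v = v"
    by (simp add: transport_outside)
next
  fix w
  assume w: "w \<in> Omega X I {1..m}"
  moreover have "b w \<in> Omega X I {1..m}"
    using w assms(1) by (simp add: confined_def)
  ultimately show "(transport X I m \<sigma> a \<circ> transport X I m \<sigma> b) (liftP \<sigma> w) = liftP \<sigma> ((a \<circ> b) w)"
    using assms(2) by (simp add: transport_liftP)
qed

lemma transport_transport:
  assumes f: "confined (Omega X I {1..m}) f" and \<rho>: "inj_on \<rho> {1..m}" "\<rho> ` {1..m} \<subseteq> {1..M}"
    and \<sigma>: "inj_on \<sigma> {1..M}"
  shows "transport X I M \<sigma> (transport X I m \<rho> f) = transport X I m (compose {1..m} \<sigma> \<rho>) f"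
proof (rule sym, rule transport_eqI)
  show "inj_on (compose {1..m} \<sigma> \<rho>) {1..m}"
    using \<rho> \<sigma> by (rule inj_on_compose_subset)
  fix v
  assume v: "v \<notin> Omega X I (compose {1..m} \<sigma> \<rho> ` {1..m})"
  show "transport X I M \<sigma> (transport X I m \<rho> f) v = v"
  proof (cases "v \<in> Omega X I (\<sigma> ` {1..M})")
    case True
    then obtain u where u: "u \<in> Omega X I {1..M}" "v = liftP \<sigma> u"
      unfolding image_liftP_Omega[symmetric] by blast
    have "u \<notin> Omega X I (\<rho> ` {1..m})"
    proof
      assume "u \<in> Omega X I (\<rho> ` {1..m})"
      then have "v \<in> Omega X I (\<sigma> ` \<rho> ` {1..m})"
        unfolding u(2) image_liftP_Omega[symmetric] by blast
      with v show False by (simp add: image_compose)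
    qed
    with u \<sigma> show ?thesis by (simp add: transport_liftP transport_outside)
  qed (rule transport_outside)
next
  fix w
  assume w: "w \<in> Omega X I {1..m}"
  have "liftP \<rho> w \<in> Omega X I {1..M}"
    using w Omega_mono[OF \<rho>(2)] unfolding image_liftP_Omega[symmetric] by blast
  moreover have "f w \<in> Omega X I {1..m}"
    using w f by (simp add: confined_def)
  ultimately show "transport X I M \<sigma> (transport X I m \<rho> f) (liftP (compose {1..m} \<sigma> \<rho>) w)
      = liftP (compose {1..m} \<sigma> \<rho>) (f w)"
    using w \<rho>(1) \<sigma> by (simp only: liftP_compose transport_liftP)
qed

section \<open>B is a class function\<close>

lemma Kn_permutes:
  assumes "\<kappa> \<in> Kn I m"
  obtains \<rho> where "\<rho> permutes {1..m}" "\<kappa> = liftS I \<rho>"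
proof -
  obtain \<rho> where "\<rho> \<in> S_inf" "\<And>a. a \<notin> {1..m} \<Longrightarrow> \<rho> a = a" "\<kappa> = liftS I \<rho>"
    using assms unfolding Kn_def by blast
  then show thesis
    by (intro that[of \<rho>]) (auto simp: permutes_def S_inf_def bij_iff)
qed

lemma Kn_conj_eq_transport:
  assumes f: "confined (Omega X I {1..m}) f" and \<rho>: "\<rho> permutes {1..m}"
  shows "liftS I \<rho> \<circ> f \<circ> inv (liftS I \<rho>) = transport X I m \<rho> f"
proof -
  have bij_lift: "bij (liftS I \<rho>)"
  proof (rule bij_betw_byWitness[where f' = "liftS I (inv \<rho>)"])
    show "\<forall>v\<in>UNIV. liftS I (inv \<rho>) (liftS I \<rho> v) = v" "\<forall>v\<in>UNIV. liftS I \<rho> (liftS I (inv \<rho>) v) = v"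
      using permutes_inverses[OF \<rho>] by (auto simp: liftS_def split: sum.split)
  qed auto
  have lift_fixed: "liftS I \<rho> v = v" if "v \<notin> Omega X I {1..m}" for v
    using that permutes_not_in[OF \<rho>] by (cases v rule: pt_cases) auto
  have inv_lift: "inv (liftS I \<rho>) (liftP \<rho> w) = w" if "w \<in> Omega X I {1..m}" for w
    using bij_lift that by (metis bij_is_inj inv_f_f liftS_eq_liftP)
  show ?thesis
  proof (rule sym, rule transport_eqI)
    show "inj_on \<rho> {1..m}"
      using \<rho> by (rule permutes_inj_on)
    fix v
    assume "v \<notin> Omega X I (\<rho> ` {1..m})"
    then have "v \<notin> Omega X I {1..m}"
      using permutes_image[OF \<rho>] by simp
    moreover have "inv (liftS I \<rho>) v = v"
      using lift_fixed[OF calculation] bij_lift by (metis bij_is_inj inv_f_f)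
    ultimately show "(liftS I \<rho> \<circ> f \<circ> inv (liftS I \<rho>)) v = v"
      using f lift_fixed by (simp add: confined_def)
  next
    fix w
    assume w: "w \<in> Omega X I {1..m}"
    then have "f w \<in> Omega X I {1..m}"
      using f by (simp add: confined_def)
    with w show "(liftS I \<rho> \<circ> f \<circ> inv (liftS I \<rho>)) (liftP \<rho> w) = liftP \<rho> (f w)"
      by (simp add: inv_lift liftS_eq_liftP)
  qed
qed

lemma Bser_eq:
  "Bser X I m f l = of_nat (card {\<sigma> \<in> injections {1..m} {1..}. (\<sigma> ` {1..m}, transport X I m \<sigma> f) = l})"
  by (simp add: Bser_def injections_def conj_lb_eq)

lemma Bser_transport:
  assumes f: "confined (Omega X I {1..m}) f" and \<rho>: "bij_betw \<rho> {1..m} {1..m}"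
  shows "Bser X I m (transport X I m \<rho> f) = Bser X I m f"
proof
  fix l
  have "(compose {1..m} \<sigma> \<rho> ` {1..m}, transport X I m (compose {1..m} \<sigma> \<rho>) f) =
        (\<sigma> ` {1..m}, transport X I m \<sigma> (transport X I m \<rho> f))"
    if "\<sigma> \<in> injections {1..m} {1..}" for \<sigma>
    using that \<rho> transport_transport[OF f, of \<rho> m \<sigma>]
    by (auto simp: injections_def bij_betw_def image_compose)
  then have "bij_betw (\<lambda>\<sigma>. compose {1..m} \<sigma> \<rho>)
      {\<sigma> \<in> injections {1..m} {1..}. (\<sigma> ` {1..m}, transport X I m \<sigma> (transport X I m \<rho> f)) = l}
      {\<tau> \<in> injections {1..m} {1..}. (\<tau> ` {1..m}, transport X I m \<tau> f) = l}"
    by (intro bij_betw_Collect[OF bij_betw_compose_injections[OF \<rho>]]) simp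
  then show "Bser X I m (transport X I m \<rho> f) l = Bser X I m f l"
    by (simp add: Bser_eq bij_betw_same_card)
qed

lemma Bser_cls:
  assumes f: "confined (Omega X I {1..m}) f" and "f' \<in> cls I m f"
  shows "Bser X I m f' = Bser X I m f" and "confined (Omega X I {1..m}) f'"
proof -
  obtain \<kappa> where \<kappa>: "\<kappa> \<in> Kn I m" and f'_\<kappa>: "f' = \<kappa> \<circ> f \<circ> inv \<kappa>"
    using assms(2) unfolding cls_def by blast
  obtain \<rho> where \<rho>: "\<rho> permutes {1..m}" and "\<kappa> = liftS I \<rho>"
    using Kn_permutes[OF \<kappa>] .
  with f'_\<kappa> have f': "f' = transport X I m \<rho> f"
    by (simp add: Kn_conj_eq_transport[OF f])
  show "Bser X I m f' = Bser X I m f"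
    using Bser_transport[OF f permutes_imp_bij[OF \<rho>]] f' by simp
  show "confined (Omega X I {1..m}) f'"
    using confined_transport[OF f permutes_inj_on[OF \<rho>]] f' permutes_image[OF \<rho>] by simp
qed

lemma self_in_cls:
  fixes f :: "('x,'i) pt \<Rightarrow> ('x,'i) pt"
  shows "f \<in> cls I m f"
proof -
  have "liftS I id = (id :: ('x,'i) pt \<Rightarrow> ('x,'i) pt)"
    by (auto simp: liftS_def split: sum.split)
  moreover have "id \<in> S_inf"
    by (simp add: S_inf_def)
  ultimately have "(id :: ('x,'i) pt \<Rightarrow> ('x,'i) pt) \<in> Kn I m"
    unfolding Kn_def by (intro image_eqI[of _ _ id]) auto
  then show ?thesis
    unfolding cls_def by (intro CollectI exI[of _ id]) simp
qed

lemma Bcls_cls: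
  assumes "confined (Omega X I {1..m}) f"
  shows "Bcls X I m (cls I m f) = Bser X I m f"
  unfolding Bcls_def using Bser_cls(1)[OF assms someI[of "\<lambda>x. x \<in> cls I m f", OF self_in_cls]] .

lemma Gn_confined:
  assumes "admissible X I G" and "g \<in> Gn X I G n"
  shows "confined (Omega X I {1..n}) g"
proof -
  have fixed: "g v = v" if "v \<notin> Omega X I {1..n}" for v
    using assms(2) that by (simp add: Gn_def Vn_def)
  have "inj g"
    using assms unfolding admissible_def fperm_def Gn_def by (auto dest: bij_is_inj)
  then have "g v \<in> Omega X I {1..n}" if "v \<in> Omega X I {1..n}" for v
    using that fixed[of "g v"] by (metis injD)
  with fixed show ?thesis
    by (simp add: confined_def)
qed

lemma Bcls_representative:
  assumes "admissible X I G" and "c \<in> quotGK X I G n" and "g \<in> c"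
  shows "Bcls X I n c = Bser X I n g" and "confined (Omega X I {1..n}) g"
proof -
  obtain g' where g': "g' \<in> Gn X I G n" "c = cls I n g'"
    using assms(2) by (auto simp: quotGK_def)
  note conf = Gn_confined[OF assms(1) g'(1)]
  show "Bcls X I n c = Bser X I n g"
    using Bcls_cls[OF conf] Bser_cls(1)[OF conf] assms(3) g'(2) by simp
  show "confined (Omega X I {1..n}) g"
    using Bser_cls(2)[OF conf] assms(3) g'(2) by simp
qed

section \<open>The partial bijection of a pair of injections\<close>

definition pb_rel :: "nat \<Rightarrow> nat \<Rightarrow> (nat \<Rightarrow> nat) \<Rightarrow> (nat \<Rightarrow> nat) \<Rightarrow> (nat \<rightharpoonup> nat)" where
  "pb_rel n k \<sigma> \<tau> = pb_inv (pb_of n \<sigma>) \<circ>\<^sub>m pb_of k \<tau>"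

lemma pb_inv_pb_of:
  "pb_inv (pb_of n \<sigma>) z = (if z \<in> \<sigma> ` {1..n} then Some (the_inv_into {1..n} \<sigma> z) else None)"
proof -
  have "ran (pb_of n \<sigma>) = \<sigma> ` {1..n}"
    by (auto simp: pb_of_def ran_def split: if_splits)
  moreover have "(THE w. pb_of n \<sigma> w = Some z) = the_inv_into {1..n} \<sigma> z"
    unfolding the_inv_into_def by (rule arg_cong[of _ _ The]) (auto simp: pb_of_def)
  ultimately show ?thesis
    by (simp add: pb_inv_def)
qed

lemma pb_rel_Some:
  assumes "inj_on \<sigma> {1..n}"
  shows "pb_rel n k \<sigma> \<tau> b = Some a \<longleftrightarrow> b \<in> {1..k} \<and> a \<in> {1..n} \<and> \<sigma> a = \<tau> b"
proof (cases "b \<in> {1..k} \<and> \<tau> b \<in> \<sigma> ` {1..n}")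
  case True
  then obtain a' where a': "a' \<in> {1..n}" "\<tau> b = \<sigma> a'"
    by blast
  with True assms have "pb_rel n k \<sigma> \<tau> b = Some a'"
    by (simp add: pb_rel_def map_comp_def pb_of_def[of k] pb_inv_pb_of the_inv_into_f_f)
  moreover have "a \<in> {1..n} \<and> \<sigma> a = \<tau> b \<longleftrightarrow> a = a'"
    using a' inj_onD[OF assms, of a a'] by auto
  ultimately show ?thesis
    using True by auto
next
  case False
  then have "pb_rel n k \<sigma> \<tau> b = None"
    by (auto simp: pb_rel_def map_comp_def pb_of_def[of k] pb_inv_pb_of)
  with False show ?thesis
    by force
qed

lemma pb_rel_eq_iff:
  assumes "inj_on \<sigma> {1..n}" and "inj_on \<sigma>' {1..n}"
  shows "pb_rel n k \<sigma> \<tau> = pb_rel n k \<sigma>' \<tau>' \<longleftrightarrow>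
         (\<forall>a\<in>{1..n}. \<forall>b\<in>{1..k}. \<sigma> a = \<tau> b \<longleftrightarrow> \<sigma>' a = \<tau>' b)"
  using pb_rel_Some[OF assms(1)] pb_rel_Some[OF assms(2)]
  by (auto intro!: map_eqI) metis+

lemma pb_rel_in_PB:
  assumes "inj_on \<sigma> {1..n}" and "inj_on \<tau> {1..k}"
  shows "pb_rel n k \<sigma> \<tau> \<in> PB k n"
  unfolding PB_def
proof (intro CollectI conjI)
  show "dom (pb_rel n k \<sigma> \<tau>) \<subseteq> {1..k}" and "ran (pb_rel n k \<sigma> \<tau>) \<subseteq> {1..n}"
    using pb_rel_Some[OF assms(1)] by (auto simp: dom_def ran_def)
  show "inj_on (pb_rel n k \<sigma> \<tau>) (dom (pb_rel n k \<sigma> \<tau>))"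
  proof
    fix b b'
    assume b: "b \<in> dom (pb_rel n k \<sigma> \<tau>)" and eq: "pb_rel n k \<sigma> \<tau> b = pb_rel n k \<sigma> \<tau> b'"
    from b obtain a where a: "pb_rel n k \<sigma> \<tau> b = Some a"
      by auto
    with eq have "pb_rel n k \<sigma> \<tau> b' = Some a"
      by simp
    with a show "b = b'"
      using pb_rel_Some[OF assms(1)] assms(2) by (metis inj_onD)
  qed
qed

lemma finite_PB: "finite (PB k n)"
proof -
  have "PB k n \<subseteq> (\<Union>A\<in>Pow {1..k}. {L. dom L = A \<and> ran L \<subseteq> {1..n}})"
    by (auto simp: PB_def)
  then show ?thesis
    by (rule finite_subset) (auto intro!: finite_set_of_finite_maps intro: finite_subset)
qed

lemma rk_pb_rel:
  assumes "inj_on \<sigma> {1..n}" and "inj_on \<tau> {1..k}"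
  shows "rk (pb_rel n k \<sigma> \<tau>) = card (\<sigma> ` {1..n} \<inter> \<tau> ` {1..k})"
proof -
  have "dom (pb_rel n k \<sigma> \<tau>) = {b \<in> {1..k}. \<tau> b \<in> \<sigma> ` {1..n}}"
    using pb_rel_Some[OF assms(1)] by (auto simp: dom_def) (metis atLeastAtMost_iff image_eqI)
  then have "\<tau> ` dom (pb_rel n k \<sigma> \<tau>) = \<sigma> ` {1..n} \<inter> \<tau> ` {1..k}"
    by auto (metis (no_types, lifting) atLeastAtMost_iff image_eqI mem_Collect_eq)
  moreover have "inj_on \<tau> (dom (pb_rel n k \<sigma> \<tau>))"
    using assms(2) \<open>dom _ = _\<close> by (auto intro: inj_on_subset)
  ultimately show ?thesis
    unfolding rk_def by (metis card_image)
qed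

lemma pb_rel_images_cover:
  assumes "inj_on \<sigma> {1..n}" and "inj_on \<tau> {1..k}"
    and "\<sigma> ` {1..n} \<subseteq> {1..m}" and "\<tau> ` {1..k} \<subseteq> {1..m}"
    and "m = n + k - rk (pb_rel n k \<sigma> \<tau>)"
  shows "\<sigma> ` {1..n} \<union> \<tau> ` {1..k} = {1..m}"
proof (rule card_subset_eq)
  have "card (\<sigma> ` {1..n} \<union> \<tau> ` {1..k}) + rk (pb_rel n k \<sigma> \<tau>) = n + k"
    using card_Un_Int[of "\<sigma> ` {1..n}" "\<tau> ` {1..k}"] assms(1,2)
    by (simp add: rk_pb_rel card_image)
  with assms(5) show "card (\<sigma> ` {1..n} \<union> \<tau> ` {1..k}) = card {1..m}"
    by simp
qed (use assms(3,4) in auto)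

lemma pb_rel_realization:
  assumes "L \<in> PB k n"
  obtains \<sigma>0 \<tau>0 where "\<sigma>0 \<in> {1..n} \<rightarrow>\<^sub>E {1..n + k - rk L}" and "inj_on \<sigma>0 {1..n}"
    and "\<tau>0 \<in> {1..k} \<rightarrow>\<^sub>E {1..n + k - rk L}" and "inj_on \<tau>0 {1..k}"
    and "pb_rel n k \<sigma>0 \<tau>0 = L"
proof -
  define m where "m = n + k - rk L"
  have L: "dom L \<subseteq> {1..k}" "ran L \<subseteq> {1..n}" "inj_on L (dom L)"
    using assms by (auto simp: PB_def)
  then have "rk L \<le> k"
    unfolding rk_def by (metis card_atLeastAtMost card_mono diff_Suc_1 finite_atLeastAtMost)
  then have "card {n+1..m} = card ({1..k} - dom L)"
    using L(1) by (simp add: m_def rk_def card_Diff_subset finite_subset)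
  then obtain \<tau> where \<tau>: "inj_on \<tau> {1..k}" "\<tau> ` {1..k} \<subseteq> {1..n} \<union> {n+1..m}"
    and \<tau>_L: "\<And>a b. a \<in> {1..k} \<Longrightarrow> b \<in> {1..n} \<Longrightarrow> \<tau> a = b \<longleftrightarrow> L a = Some b"
    using extend_partial_injection[of "{1..k}" L "{1..n}" "{n+1..m}"] L by auto
  have "{1..n} \<union> {n+1..m} = {1..m}"
    using \<open>rk L \<le> k\<close> by (auto simp: m_def)
  with \<tau>(2) have \<tau>_into: "\<tau> ` {1..k} \<subseteq> {1..m}"
    by simp
  show thesis
  proof
    show "restrict id {1..n} \<in> {1..n} \<rightarrow>\<^sub>E {1..n + k - rk L}"
      using \<open>rk L \<le> k\<close> by auto
    show "restrict \<tau> {1..k} \<in> {1..k} \<rightarrow>\<^sub>E {1..n + k - rk L}"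
      using \<tau>_into by (auto simp: m_def image_subset_iff)
    show "inj_on (restrict id {1..n}) {1..n}" "inj_on (restrict \<tau> {1..k}) {1..k}"
      using \<tau>(1) by auto
    show "pb_rel n k (restrict id {1..n}) (restrict \<tau> {1..k}) = L"
    proof (rule map_eqI)
      fix b a
      have "pb_rel n k (restrict id {1..n}) (restrict \<tau> {1..k}) b = Some a \<longleftrightarrow>
          b \<in> {1..k} \<and> a \<in> {1..n} \<and> \<tau> b = a"
        using pb_rel_Some[of "restrict id {1..n}" n k] by auto
      also have "\<dots> \<longleftrightarrow> L b = Some a"
      proof
        assume "L b = Some a"
        moreover from this have "b \<in> {1..k}" "a \<in> {1..n}"
          using L(1,2) domI[of L b a] ranI[of L b a] by auto
        ultimately show "b \<in> {1..k} \<and> a \<in> {1..n} \<and> \<tau> b = a"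
          using \<tau>_L by simp
      qed (use \<tau>_L[of b a] in simp)
      finally show "pb_rel n k (restrict id {1..n}) (restrict \<tau> {1..k}) b = Some a \<longleftrightarrow> L b = Some a" .
    qed
  qed
qed

section \<open>The product formula\<close>

definition factor_pairs :: "'x set \<Rightarrow> 'i set \<Rightarrow> nat \<Rightarrow> nat \<Rightarrow> (('x,'i) pt \<Rightarrow> ('x,'i) pt)
    \<Rightarrow> (('x,'i) pt \<Rightarrow> ('x,'i) pt) \<Rightarrow> nat set \<Rightarrow> (('x,'i) pt \<Rightarrow> ('x,'i) pt) \<Rightarrow> ((nat \<Rightarrow> nat) \<times> (nat \<Rightarrow> nat)) set" where
  "factor_pairs X I n k g h N \<nu> =
     {(\<sigma>, \<tau>). \<sigma> \<in> injections {1..n} {1..} \<and> \<tau> \<in> injections {1..k} {1..} \<and>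
             \<sigma> ` {1..n} \<union> \<tau> ` {1..k} = N \<and> transport X I n \<sigma> g \<circ> transport X I k \<tau> h = \<nu>}"

lemma finite_factor_pairs: "finite (factor_pairs X I n k g h N \<nu>)"
proof (cases "finite N")
  case True
  have "factor_pairs X I n k g h N \<nu> \<subseteq> ({1..n} \<rightarrow>\<^sub>E N) \<times> ({1..k} \<rightarrow>\<^sub>E N)"
  proof
    fix s
    assume "s \<in> factor_pairs X I n k g h N \<nu>"
    then obtain \<sigma> \<tau> where s: "s = (\<sigma>, \<tau>)" "\<sigma> \<in> injections {1..n} {1..}" "\<tau> \<in> injections {1..k} {1..}"
      and N: "\<sigma> ` {1..n} \<union> \<tau> ` {1..k} = N"
      by (auto simp: factor_pairs_def)
    have "\<sigma> \<in> {1..n} \<rightarrow>\<^sub>E N" "\<tau> \<in> {1..k} \<rightarrow>\<^sub>E N"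
      using PiE_mono[of "{1..n}" "\<lambda>_. \<sigma> ` {1..n}" "\<lambda>_. N"] PiE_mono[of "{1..k}" "\<lambda>_. \<tau> ` {1..k}" "\<lambda>_. N"]
        injections_PiE_image[OF s(2)] injections_PiE_image[OF s(3)] N by blast+
    with s(1) show "s \<in> ({1..n} \<rightarrow>\<^sub>E N) \<times> ({1..k} \<rightarrow>\<^sub>E N)"
      by simp
  qed
  moreover have "finite (({1..n} \<rightarrow>\<^sub>E N) \<times> ({1..k} \<rightarrow>\<^sub>E N))"
    using True by (simp add: finite_PiE)
  ultimately show ?thesis
    by (rule finite_subset)
next
  case False
  have "finite (\<sigma> ` {1..n} \<union> \<tau> ` {1..k})" for \<sigma> \<tau> :: "nat \<Rightarrow> nat"
    by simp
  with False have "factor_pairs X I n k g h N \<nu> = {}"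
    unfolding factor_pairs_def by auto
  then show ?thesis
    by (metis finite.emptyI)
qed

lemma conv_Bser:
  "conv (Bser X I n g) (Bser X I k h) (N, \<nu>) = of_nat (card (factor_pairs X I n k g h N \<nu>))"
proof -
  let ?\<phi> = "\<lambda>\<sigma>. (\<sigma> ` {1..n}, transport X I n \<sigma> g)" and ?\<psi> = "\<lambda>\<tau>. (\<tau> ` {1..k}, transport X I k \<tau> h)"
  let ?R = "\<lambda>p q. fst p \<union> fst q = N \<and> snd p \<circ> snd q = \<nu>"
  let ?A = "\<lambda>p. card {\<sigma> \<in> injections {1..n} {1..}. ?\<phi> \<sigma> = p}"
    and ?B = "\<lambda>q. card {\<tau> \<in> injections {1..k} {1..}. ?\<psi> \<tau> = q}"
  have pairs: "factor_pairs X I n k g h N \<nu> =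
      {(\<sigma>, \<tau>). \<sigma> \<in> injections {1..n} {1..} \<and> \<tau> \<in> injections {1..k} {1..} \<and> ?R (?\<phi> \<sigma>) (?\<psi> \<tau>)}"
    by (simp add: factor_pairs_def)
  have "finite {\<sigma> \<in> injections {1..n} {1..}. ?\<phi> \<sigma> = p}" for p
    by (rule finite_subset[OF _ finite_injections_onto[of "{1..n}" "{1..}" "fst p"]]) auto
  moreover have "finite {\<tau> \<in> injections {1..k} {1..}. ?\<psi> \<tau> = q}" for q
    by (rule finite_subset[OF _ finite_injections_onto[of "{1..k}" "{1..}" "fst q"]]) auto
  ultimately have "(\<Sum>(p, q) \<in> {(p, q). ?A p \<noteq> 0 \<and> ?B q \<noteq> 0 \<and> ?R p q}. ?A p * ?B q) =
      card (factor_pairs X I n k g h N \<nu>)"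
    using finite_factor_pairs[of X I n k g h N \<nu>] unfolding pairs by (intro sum_card_fibres_mult) auto
  from arg_cong[OF this, of "of_nat :: nat \<Rightarrow> complex"] show ?thesis
    by (simp add: conv_def Bser_eq case_prod_beta')
qed

lemma card_factor_pairs_pb_rel:
  assumes g: "confined (Omega X I {1..n}) g" and h: "confined (Omega X I {1..k}) h"
    and \<sigma>0: "inj_on \<sigma>0 {1..n}" "\<sigma>0 ` {1..n} \<subseteq> {1..m}"
    and \<tau>0: "inj_on \<tau>0 {1..k}" "\<tau>0 ` {1..k} \<subseteq> {1..m}"
    and m: "m = n + k - rk (pb_rel n k \<sigma>0 \<tau>0)"
  defines "f \<equiv> transport X I n \<sigma>0 g \<circ> transport X I k \<tau>0 h"
  shows "card {s \<in> factor_pairs X I n k g h N \<nu>. pb_rel n k (fst s) (snd s) = pb_rel n k \<sigma>0 \<tau>0} =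
         card {\<rho> \<in> injections {1..m} {1..}. (\<rho> ` {1..m}, transport X I m \<rho> f) = (N, \<nu>)}"
proof -
  have cover: "\<sigma>0 ` {1..n} \<union> \<tau>0 ` {1..k} = {1..m}"
    using pb_rel_images_cover[OF \<sigma>0(1) \<tau>0(1) \<sigma>0(2) \<tau>0(2) m] .
  have h_m: "confined (Omega X I {1..m}) (transport X I k \<tau>0 h)"
    using confined_transport[OF h \<tau>0(1)] Omega_mono[OF \<tau>0(2)] by (rule confined_mono)
  have factors: "(compose {1..n} \<rho> \<sigma>0 ` {1..n} \<union> compose {1..k} \<rho> \<tau>0 ` {1..k} = N \<and>
      transport X I n (compose {1..n} \<rho> \<sigma>0) g \<circ> transport X I k (compose {1..k} \<rho> \<tau>0) h = \<nu>) \<longleftrightarrow>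
      (\<rho> ` {1..m}, transport X I m \<rho> f) = (N, \<nu>)"
    if "\<rho> \<in> injections {1..m} {1..}" for \<rho>
  proof -
    have \<rho>: "inj_on \<rho> {1..m}"
      using that by (simp add: injections_def)
    have "transport X I m \<rho> f = transport X I m \<rho> (transport X I n \<sigma>0 g) \<circ> transport X I m \<rho> (transport X I k \<tau>0 h)"
      unfolding f_def using h_m \<rho> by (rule transport_comp)
    also have "\<dots> = transport X I n (compose {1..n} \<rho> \<sigma>0) g \<circ> transport X I k (compose {1..k} \<rho> \<tau>0) h"
      using transport_transport[OF g \<sigma>0 \<rho>] transport_transport[OF h \<tau>0 \<rho>] by simp
    finally show ?thesis
      using cover by (auto simp: image_compose simp flip: image_Un)
  qed
  let ?coincident = "{(\<sigma>, \<tau>). \<sigma> \<in> injections {1..n} {1..} \<and> \<tau> \<in> injections {1..k} {1..} \<and>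
                  (\<forall>a\<in>{1..n}. \<forall>b\<in>{1..k}. \<sigma> a = \<tau> b \<longleftrightarrow> \<sigma>0 a = \<tau>0 b)}"
  let ?factor = "\<lambda>(\<sigma>, \<tau>). \<sigma> ` {1..n} \<union> \<tau> ` {1..k} = N \<and> transport X I n \<sigma> g \<circ> transport X I k \<tau> h = \<nu>"
  have "bij_betw (\<lambda>\<rho>. (compose {1..n} \<rho> \<sigma>0, compose {1..k} \<rho> \<tau>0))
      {\<rho> \<in> injections {1..m} {1..}. (\<rho> ` {1..m}, transport X I m \<rho> f) = (N, \<nu>)}
      {s \<in> ?coincident. ?factor s}"
    using factors by (intro bij_betw_Collect[OF bij_betw_amalgamate[OF \<sigma>0(1) \<tau>0(1) cover]]) simp
  moreover have "{s \<in> ?coincident. ?factor s} =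
      {s \<in> factor_pairs X I n k g h N \<nu>. pb_rel n k (fst s) (snd s) = pb_rel n k \<sigma>0 \<tau>0}"
    using \<sigma>0(1) by (auto simp: factor_pairs_def injections_def pb_rel_eq_iff)
  ultimately show ?thesis
    by (simp add: bij_betw_same_card)
qed

lemma star_cls_realization:
  assumes L: "L \<in> PB k n"
  obtains \<sigma>0 \<tau>0 where "inj_on \<sigma>0 {1..n}" "\<sigma>0 ` {1..n} \<subseteq> {1..n + k - rk L}"
    and "inj_on \<tau>0 {1..k}" "\<tau>0 ` {1..k} \<subseteq> {1..n + k - rk L}" and "pb_rel n k \<sigma>0 \<tau>0 = L"
    and "star_cls I X n k g h L = cls I (n + k - rk L) (transport X I n \<sigma>0 g \<circ> transport X I k \<tau>0 h)"
proof -
  define m where "m = n + k - rk L"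
  define Q where "Q = (\<lambda>(\<sigma>0::nat\<Rightarrow>nat, \<tau>0::nat\<Rightarrow>nat). \<sigma>0 \<in> {1..n} \<rightarrow>\<^sub>E {1..m} \<and> inj_on \<sigma>0 {1..n} \<and>
                               \<tau>0 \<in> {1..k} \<rightarrow>\<^sub>E {1..m} \<and> inj_on \<tau>0 {1..k} \<and>
                               pb_inv (pb_of n \<sigma>0) \<circ>\<^sub>m pb_of k \<tau>0 = L)"
  obtain \<sigma>0 \<tau>0 where st: "(SOME st. Q st) = (\<sigma>0, \<tau>0)"
    by (metis surj_pair)
  obtain \<sigma>1 \<tau>1 where "\<sigma>1 \<in> {1..n} \<rightarrow>\<^sub>E {1..m}" "inj_on \<sigma>1 {1..n}"
    "\<tau>1 \<in> {1..k} \<rightarrow>\<^sub>E {1..m}" "inj_on \<tau>1 {1..k}" "pb_rel n k \<sigma>1 \<tau>1 = L"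
    unfolding m_def by (rule pb_rel_realization[OF L])
  then have "Q (\<sigma>1, \<tau>1)"
    by (simp add: Q_def pb_rel_def)
  then have "Q (\<sigma>0, \<tau>0)"
    unfolding st[symmetric] by (rule someI)
  moreover have "star_cls I X n k g h L = cls I m (transport X I n \<sigma>0 g \<circ> transport X I k \<tau>0 h)"
    unfolding star_cls_def Let_def m_def[symmetric] Q_def[symmetric] st by (simp add: transport_def)
  ultimately show thesis
    by (intro that[of \<sigma>0 \<tau>0]) (auto simp: Q_def pb_rel_def m_def)
qed

lemma Bcls_star_cls:
  assumes L: "L \<in> PB k n"
    and g: "confined (Omega X I {1..n}) g" and h: "confined (Omega X I {1..k}) h"
  shows "Bcls X I (n + k - rk L) (star_cls I X n k g h L) (N, \<nu>) =
         of_nat (card {s \<in> factor_pairs X I n k g h N \<nu>. pb_rel n k (fst s) (snd s) = L})"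
proof -
  define m where "m = n + k - rk L"
  obtain \<sigma>0 \<tau>0 where \<sigma>0: "inj_on \<sigma>0 {1..n}" "\<sigma>0 ` {1..n} \<subseteq> {1..m}"
    and \<tau>0: "inj_on \<tau>0 {1..k}" "\<tau>0 ` {1..k} \<subseteq> {1..m}" and L_eq: "pb_rel n k \<sigma>0 \<tau>0 = L"
    and star: "star_cls I X n k g h L = cls I m (transport X I n \<sigma>0 g \<circ> transport X I k \<tau>0 h)"
    unfolding m_def by (rule star_cls_realization[OF L])
  define f where "f = transport X I n \<sigma>0 g \<circ> transport X I k \<tau>0 h"
  have "confined (Omega X I {1..m}) (transport X I n \<sigma>0 g)"
    using confined_transport[OF g \<sigma>0(1)] Omega_mono[OF \<sigma>0(2)] by (rule confined_mono)
  moreover have "confined (Omega X I {1..m}) (transport X I k \<tau>0 h)"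
    using confined_transport[OF h \<tau>0(1)] Omega_mono[OF \<tau>0(2)] by (rule confined_mono)
  ultimately have "confined (Omega X I {1..m}) f"
    unfolding f_def by (rule confined_comp)
  then have "Bcls X I m (star_cls I X n k g h L) (N, \<nu>) = Bser X I m f (N, \<nu>)"
    by (simp add: star f_def Bcls_cls)
  also have "\<dots> = of_nat (card {s \<in> factor_pairs X I n k g h N \<nu>. pb_rel n k (fst s) (snd s) = L})"
    unfolding Bser_eq f_def using card_factor_pairs_pb_rel[OF g h \<sigma>0 \<tau>0] L_eq m_def by simp
  finally show ?thesis
    unfolding m_def .
qed

theorem proposition2p2:
  fixes X :: "'x set" and I :: "'i set"
    and G :: "(('x,'i) pt \<Rightarrow> ('x,'i) pt) set"
    and n k :: nat and c d :: "(('x,'i) pt \<Rightarrow> ('x,'i) pt) set"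
    and g h :: "('x,'i) pt \<Rightarrow> ('x,'i) pt"
  assumes "finite I" and "countable X" and "admissible X I G"
    and "c \<in> quotGK X I G n" and "d \<in> quotGK X I G k"
    and "g \<in> c" and "h \<in> d"
  shows "conv (Bcls X I n c) (Bcls X I k d) =
         (\<lambda>l. \<Sum>L\<in>PB k n. Bcls X I (n + k - rk L) (star_cls I X n k g h L) l)"
proof
  fix l :: "('x,'i) lb"
  obtain N \<nu> where l: "l = (N, \<nu>)"
    by fastforce
  note c = Bcls_representative[OF assms(3,4,6)] and d = Bcls_representative[OF assms(3,5,7)]
  let ?pairs = "factor_pairs X I n k g h N \<nu>"
  have "card ?pairs = (\<Sum>L\<in>PB k n. card {s \<in> ?pairs. pb_rel n k (fst s) (snd s) = L})"
    by (rule card_eq_sum_card_fibres[OF finite_factor_pairs finite_PB])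
      (auto simp: factor_pairs_def injections_def intro: pb_rel_in_PB)
  then show "conv (Bcls X I n c) (Bcls X I k d) l =
      (\<Sum>L\<in>PB k n. Bcls X I (n + k - rk L) (star_cls I X n k g h L) l)"
    by (simp add: l c(1) d(1) conv_Bser Bcls_star_cls[OF _ c(2) d(2)])
qed

end
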